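(* Let $A:X\to Y$ be a bounded linear operator between Banach spaces, $1<p<\infty$, $C,\sigma>0$, and $G\subset B_Y$ with $\overline{\mathrm{co}}(G)=B_Y$. Suppose that for every $y\in G$ and every weakly null net $(x_\lambda)\subset\sigma B_X$, $\limsup_\lambda\|y+Ax_\lambda\|\le 1+C\sigma^p$. Then $\rho(\sigma,A)\le C\sigma^p$.
   Context: $\rho(\sigma,A)=\sup\{\limsup_\lambda\|y+Ax_\lambda\|-1 : y\in B_Y,\ (x_\lambda)\text{ a weakly null net in }\sigma B_X\}$. *)

theory Defs
  imports "HOL-Analysis.Analysis" "HOL-Library.Liminf_Limsup"
begin

text \<open>A weakly null net contained in \<sigma> B_X, represented by the filter it induces on X
  (the image filter of the net): a proper filter, concentrated on the closed ball of
  radius \<sigma>, along which every continuous linear functional tends to 0.\<close>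
definition weakly_null_net_in :: "'a::real_normed_vector filter \<Rightarrow> real \<Rightarrow> bool" where
  "weakly_null_net_in F \<sigma> \<longleftrightarrow>
     F \<noteq> bot \<and> eventually (\<lambda>x. x \<in> cball 0 \<sigma>) F \<and>
     (\<forall>f::'a \<Rightarrow> real. bounded_linear f \<longrightarrow> (f \<longlongrightarrow> 0) F)"

definition rho :: "real \<Rightarrow> ('a::real_normed_vector \<Rightarrow> 'b::real_normed_vector) \<Rightarrow> ereal" where
  "rho \<sigma> A = (SUP yF \<in> {(y, F). y \<in> cball (0::'b) 1 \<and> weakly_null_net_in F \<sigma>}.
       Limsup (snd yF) (\<lambda>x. ereal (norm (fst yF + A x))) - 1)"

end

theory Submission
  imports Defs
begin

text \<open>For a fixed weakly null net, the set of \<open>y\<close> with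
  \<open>limsup \<parallel>y + A x\<^sub>\<lambda>\<parallel> \<le> K\<close> is convex (the norm is convex) and closed
  (the norm is 1-Lipschitz in \<open>y\<close>). Intersecting over all weakly null nets in
  \<open>\<sigma> B\<^sub>X\<close> gives a closed convex set containing \<open>G\<close>, hence containing
  \<open>closure (convex hull G) = B\<^sub>Y\<close>. Nothing about \<open>A\<close>, \<open>p\<close>, \<open>C\<close> or \<open>\<sigma>\<close>
  beyond the shape of the bound is used.\<close>

lemma Limsup_le_ereal_iff_eventually_less:
  "Limsup F (\<lambda>x. ereal (f x)) \<le> ereal K \<longleftrightarrow> (\<forall>e>0. eventually (\<lambda>x. f x < K + e) F)"
proof
  assume L: "Limsup F (\<lambda>x. ereal (f x)) \<le> ereal K"
  show "\<forall>e>0. eventually (\<lambda>x. f x < K + e) F"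
  proof (intro allI impI)
    fix e :: real assume "e > 0"
    then have "ereal (K + e) > ereal K" by simp
    with L Limsup_le_iff[of F "\<lambda>x. ereal (f x)" "ereal K"]
    have "eventually (\<lambda>x. ereal (K + e) > ereal (f x)) F" by blast
    then show "eventually (\<lambda>x. f x < K + e) F" by simp
  qed
next
  assume H: "\<forall>e>0. eventually (\<lambda>x. f x < K + e) F"
  show "Limsup F (\<lambda>x. ereal (f x)) \<le> ereal K"
    unfolding Limsup_le_iff
  proof (intro allI impI)
    fix z assume z: "z > ereal K"
    show "eventually (\<lambda>x. z > ereal (f x)) F"
    proof (cases z)
      case (real r)
      with z have "r - K > 0" by simp
      with H have "eventually (\<lambda>x. f x < K + (r - K)) F" by blast
      then show ?thesis by eventually_elim (simp add: real)
    qed (use z in simp_all)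
  qed
qed

lemma convex_Limsup_norm_add_le:
  fixes f :: "'c \<Rightarrow> 'b::real_normed_vector"
  shows "convex {y. Limsup F (\<lambda>x. ereal (norm (y + f x))) \<le> ereal K}"
proof (rule convexI)
  fix u v :: 'b and s t :: real
  assume "u \<in> {y. Limsup F (\<lambda>x. ereal (norm (y + f x))) \<le> ereal K}"
    and "v \<in> {y. Limsup F (\<lambda>x. ereal (norm (y + f x))) \<le> ereal K}"
  then have u: "\<forall>e>0. eventually (\<lambda>x. norm (u + f x) < K + e) F"
    and v: "\<forall>e>0. eventually (\<lambda>x. norm (v + f x) < K + e) F"
    by (simp_all add: Limsup_le_ereal_iff_eventually_less)
  assume st: "0 \<le> s" "0 \<le> t" "s + t = 1"
  have "eventually (\<lambda>x. norm (s *\<^sub>R u + t *\<^sub>R v + f x) < K + e) F" if "e > 0" for e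
  proof -
    from u v that have "eventually (\<lambda>x. norm (u + f x) < K + e \<and> norm (v + f x) < K + e) F"
      by (simp add: eventually_conj)
    then show ?thesis
    proof eventually_elim
      case (elim x)
      have "s *\<^sub>R u + t *\<^sub>R v + f x = s *\<^sub>R (u + f x) + t *\<^sub>R (v + f x)"
        using st(3) by (simp add: algebra_simps flip: scaleR_add_left)
      then have "norm (s *\<^sub>R u + t *\<^sub>R v + f x) \<le> s * norm (u + f x) + t * norm (v + f x)"
        using norm_triangle_ineq[of "s *\<^sub>R (u + f x)" "t *\<^sub>R (v + f x)"] st by simp
      also have "\<dots> < K + e"
        using elim st by (intro convex_bound_lt) auto
      finally show ?case .
    qed
  qed
  then show "s *\<^sub>R u + t *\<^sub>R v \<in> {y. Limsup F (\<lambda>x. ereal (norm (y + f x))) \<le> ereal K}"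
    by (simp add: Limsup_le_ereal_iff_eventually_less)
qed

lemma closed_Limsup_norm_add_le:
  fixes f :: "'c \<Rightarrow> 'b::real_normed_vector"
  shows "closed {y. Limsup F (\<lambda>x. ereal (norm (y + f x))) \<le> ereal K}"
  unfolding closure_subset_eq[symmetric]
proof
  fix y assume y: "y \<in> closure {y. Limsup F (\<lambda>x. ereal (norm (y + f x))) \<le> ereal K}"
  have "eventually (\<lambda>x. norm (y + f x) < K + e) F" if "e > 0" for e
  proof -
    from y \<open>e > 0\<close> obtain y' where "Limsup F (\<lambda>x. ereal (norm (y' + f x))) \<le> ereal K"
      and "dist y' y < e / 2"
      by (auto simp: closure_approachable dest!: spec[of _ "e / 2"])
    moreover from this have "eventually (\<lambda>x. norm (y' + f x) < K + e / 2) F"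
      using \<open>e > 0\<close> by (simp add: Limsup_le_ereal_iff_eventually_less)
    ultimately show ?thesis
    proof (elim eventually_mono)
      fix x assume "norm (y' + f x) < K + e / 2" and "dist y' y < e / 2"
      moreover have "norm (y + f x) \<le> norm (y' + f x) + dist y' y"
        using norm_triangle_ineq[of "y' + f x" "y - y'"]
        by (simp add: dist_norm norm_minus_commute algebra_simps)
      ultimately show "norm (y + f x) < K + e" by linarith
    qed
  qed
  then show "y \<in> {y. Limsup F (\<lambda>x. ereal (norm (y + f x))) \<le> ereal K}"
    by (simp add: Limsup_le_ereal_iff_eventually_less)
qed

theorem proposition2p2:
  fixes A :: "'a::banach \<Rightarrow> 'b::banach"
    and p C \<sigma> :: real
    and G :: "'b set"
  assumes "bounded_linear A"
    and "1 < p"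
    and "C > 0" and "\<sigma> > 0"
    and "G \<subseteq> cball 0 1"
    and "closure (convex hull G) = cball 0 1"
    and "\<forall>y\<in>G. \<forall>F::'a filter. weakly_null_net_in F \<sigma> \<longrightarrow>
           Limsup F (\<lambda>x. ereal (norm (y + A x))) \<le> ereal (1 + C * \<sigma> powr p)"
  shows "rho \<sigma> A \<le> ereal (C * \<sigma> powr p)"
proof -
  define S where "S = (\<Inter>F \<in> {F. weakly_null_net_in F \<sigma>}.
    {y. Limsup F (\<lambda>x. ereal (norm (y + A x))) \<le> ereal (1 + C * \<sigma> powr p)})"
  have "closure (convex hull G) \<subseteq> S"
  proof (intro closure_minimal hull_minimal)
    show "G \<subseteq> S" using assms(7) by (auto simp: S_def)
    show "convex S" unfolding S_def by (intro convex_INT convex_Limsup_norm_add_le)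
    show "closed S" unfolding S_def by (intro closed_INT ballI closed_Limsup_norm_add_le)
  qed
  then have "cball 0 1 \<subseteq> S" using assms(6) by simp
  have "Limsup F (\<lambda>x. ereal (norm (y + A x))) - 1 \<le> ereal (C * \<sigma> powr p)"
    if "y \<in> cball 0 1" and "weakly_null_net_in F \<sigma>" for y and F :: "'a filter"
  proof -
    from that \<open>cball 0 1 \<subseteq> S\<close>
    have "Limsup F (\<lambda>x. ereal (norm (y + A x))) \<le> ereal (1 + C * \<sigma> powr p)"
      by (auto simp: S_def)
    then have "Limsup F (\<lambda>x. ereal (norm (y + A x))) - 1 \<le> ereal (1 + C * \<sigma> powr p) - 1"
      by (rule ereal_minus_mono) simp
    then show ?thesis by (simp add: one_ereal_def)
  qed
  then show ?thesis
    unfolding rho_def by (intro SUP_least) auto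
qed

end
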